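(* Let $M\in[\mathbb N]$, $n\in\mathbb N$ and $\xi<\omega_1$. Suppose that $S_\xi^n(M)=\bigcup_{i=1}^k\mathfrak F_i$, where each $\mathfrak F_i$ is a hereditary family of finite subsets of $\mathbb N$. Then there exist $N\in[M]$ and $i_0\le k$ such that $S_\xi^n(N)\subset\mathfrak F_{i_0}$.
   Context: $[M]$ is the set of infinite subsets of $M$, enumerated increasingly $N=(n_i)$; $N(F)=\{n_i:i\in F\}$, $\mathfrak G(N)=\{N(F):F\in\mathfrak G\}$. A family is hereditary if closed under taking subsets. For finite nonempty $F_1$ and nonempty $F_2$, $F_1<F_2$ means $\max F_1<\min F_2$. For hereditary $\mathfrak G$, $\mathfrak G^n=\{\bigcup_{i=1}^nF_i:F_1<\cdots<F_n,\ F_i\in\mathfrak G\}$; $S_\xi^n(N)$ means $(S_\xi^n)(N)$. For each countable ordinal $\xi$ fix successor ordinals $(\beta_j(\xi)+1)_j$: equal to $\xi$ if $\xi$ is a successor, strictly increasing to $\xi$ if $\xi$ is a limit. Schreier families: $S_0=\{\{j\}:j\in\mathbb N\}\cup\{\emptyset\}$; $S_{\zeta+1}=\{\bigcup_{i=1}^jF_i:j\le\min F_1,\ F_1<\cdots<F_j,\ F_i\in S_\zeta\}\cup\{\emptyset\}$; for limit $\xi$, $S_\xi=\{F:F\in S_{\beta_j(\xi)+1}\text{ for some }j\le\min F\}$. *)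

theory Defs
  imports Main "HOL-Library.Infinite_Set" "HOL-Library.Countable_Set"
begin

definition osucc :: "'o::wellorder \<Rightarrow> 'o" where
  "osucc \<gamma> = (LEAST x. \<gamma> < x)"

definition is_zero_ord :: "'o::wellorder \<Rightarrow> bool" where
  "is_zero_ord \<xi> \<longleftrightarrow> \<not> (\<exists>\<gamma>. \<gamma> < \<xi>)"

definition is_succ_ord :: "'o::wellorder \<Rightarrow> bool" where
  "is_succ_ord \<xi> \<longleftrightarrow> (\<exists>\<gamma>. \<gamma> < \<xi> \<and> (\<forall>x. \<gamma> < x \<longrightarrow> \<xi> \<le> x))"

definition is_limit_ord :: "'o::wellorder \<Rightarrow> bool" where
  "is_limit_ord \<xi> \<longleftrightarrow> \<not> is_zero_ord \<xi> \<and> \<not> is_succ_ord \<xi>"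

definition opred :: "'o::wellorder \<Rightarrow> 'o" where
  "opred \<xi> = (THE \<gamma>. \<gamma> < \<xi> \<and> (\<forall>x. \<gamma> < x \<longrightarrow> \<xi> \<le> x))"

text \<open>The fixed system of successor ordinals \<open>(\<beta>_j(\<eta>)+1)_{j\<ge>1}\<close> for all \<open>\<eta> \<le> \<xi>\<close>
  (only indices \<open>j \<ge> 1\<close> are used).\<close>
definition fundamental_system :: "('o::wellorder \<Rightarrow> nat \<Rightarrow> 'o) \<Rightarrow> 'o \<Rightarrow> bool" where
  "fundamental_system \<beta> \<xi> \<longleftrightarrow>
     (\<forall>\<eta>\<le>\<xi>.
        (is_succ_ord \<eta> \<longrightarrow> (\<forall>j\<ge>1. osucc (\<beta> \<eta> j) = \<eta>)) \<and>
        (is_limit_ord \<eta> \<longrightarrow>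
           (\<forall>i j. 1 \<le> i \<longrightarrow> i < j \<longrightarrow> \<beta> \<eta> i < \<beta> \<eta> j) \<and>
           (\<forall>j\<ge>1. osucc (\<beta> \<eta> j) < \<eta>) \<and>
           (\<forall>\<gamma><\<eta>. \<exists>j\<ge>1. \<gamma> < osucc (\<beta> \<eta> j))))"

definition schreier0 :: "nat set set" where
  "schreier0 = insert {} {{j} | j. 1 \<le> j}"

definition schreier_step :: "nat set set \<Rightarrow> nat set set" where
  "schreier_step G = insert {}
     {\<Union>i<j. B i | j B. 1 \<le> j \<and> (\<forall>i<j. B i \<in> G \<and> B i \<noteq> {} \<and> finite (B i)) \<and>
        (\<forall>i. Suc i < j \<longrightarrow> Max (B i) < Min (B (Suc i))) \<and> j \<le> Min (B 0)}"

definition schreier_limit :: "(nat \<Rightarrow> nat set set) \<Rightarrow> nat set set" where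
  "schreier_limit T = {F. F = {} \<or> (\<exists>j. 1 \<le> j \<and> j \<le> Min F \<and> F \<in> T j)}"

definition schreier :: "('o::wellorder \<Rightarrow> nat \<Rightarrow> 'o) \<Rightarrow> 'o \<Rightarrow> nat set set" where
  "schreier \<beta> = wfrec {(x, y). x < y}
     (\<lambda>R \<xi>. if is_zero_ord \<xi> then schreier0
            else if is_succ_ord \<xi> then schreier_step (R (opred \<xi>))
            else schreier_limit (\<lambda>j. R (osucc (\<beta> \<xi> j))))"

definition hereditary :: "nat set set \<Rightarrow> bool" where
  "hereditary \<F> \<longleftrightarrow> (\<forall>A\<in>\<F>. \<forall>B. B \<subseteq> A \<longrightarrow> B \<in> \<F>)"

text \<open>\<open>\<G>^n\<close>: unions of \<open>n\<close> successive members (empty members allowed,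
  with the convention that \<open>\<emptyset> < F\<close> and \<open>F < \<emptyset>\<close>).\<close>
definition fam_power :: "nat set set \<Rightarrow> nat \<Rightarrow> nat set set" where
  "fam_power G n = {\<Union>i<n. B i | B. (\<forall>i<n. B i \<in> G) \<and>
      (\<forall>i i'. i < i' \<longrightarrow> i' < n \<longrightarrow> (\<forall>a\<in>B i. \<forall>b\<in>B i'. a < b))}"

text \<open>\<open>N = (n_i)_{i\<ge>1}\<close> enumerated increasingly; \<open>N(F) = {n_i : i \<in> F}\<close>.\<close>
definition fam_image :: "nat set \<Rightarrow> nat set set \<Rightarrow> nat set set" where
  "fam_image N G = (\<lambda>F. (\<lambda>i. enumerate N (i - 1)) ` F) ` G"

end

theory Submission
  imports Defs
begin

(* The families S_xi, and hence S_xi^n, are regular: hereditary, spreading, and compact in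
   the sense that no infinite set has all of its finite subsets in the family.  Regularity
   passes to powers G^n and to diagonal limits of families T_j, and the successor step of a
   family G is the diagonal limit of the powers G^j; so it holds for all S_xi by transfinite
   induction.

   For a compact hereditary family G, proper extension of members of G is well founded.
   Induction along it, with a diagonal argument at each step, gives a Ramsey theorem: if G
   is covered by finitely many hereditary families, then every infinite set contains an
   infinite N such that all members of G inside N belong to one of them.  Apply this to the
   index sets F in S_xi^n, coloured by the family containing M(F), to obtain L; then for
   N = M(L) each N(F) is M(F') for some F' inside L, and F' lies in S_xi^n by spreading. *)

section \<open>Transfinite induction over Schreier families\<close>

lemma schreier_unfold:
  "schreier \<beta> \<xi> =
     (if is_zero_ord \<xi> then schreier0
      else if is_succ_ord \<xi> then schreier_step (cut (schreier \<beta>) {(x, y). x < y} \<xi> (opred \<xi>))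
      else schreier_limit (\<lambda>j. cut (schreier \<beta>) {(x, y). x < y} \<xi> (osucc (\<beta> \<xi> j))))"
  unfolding schreier_def by (subst wfrec[OF wellorder_class.wf]) simp

lemma opred_less:
  fixes \<eta> :: "'o::wellorder"
  assumes "is_succ_ord \<eta>"
  shows "opred \<eta> < \<eta>"
proof -
  obtain \<gamma> where \<gamma>: "\<gamma> < \<eta>" "\<forall>x. \<gamma> < x \<longrightarrow> \<eta> \<le> x"
    using assms unfolding is_succ_ord_def by blast
  have "opred \<eta> = \<gamma>"
    unfolding opred_def
  proof (rule the_equality)
    fix \<gamma>' assume \<gamma>': "\<gamma>' < \<eta> \<and> (\<forall>x. \<gamma>' < x \<longrightarrow> \<eta> \<le> x)"
    show "\<gamma>' = \<gamma>"
    proof (rule linorder_cases[of \<gamma>' \<gamma>])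
      assume "\<gamma>' < \<gamma>"
      with \<gamma>' \<gamma>(1) show ?thesis by (auto dest: leD)
    next
      assume "\<gamma> < \<gamma>'"
      with \<gamma>' \<gamma>(2) show ?thesis by (auto dest: leD)
    qed
  qed (use \<gamma> in blast)
  with \<gamma> show ?thesis by simp
qed

lemma schreier_induct:
  fixes \<xi> :: "'o::wellorder"
  assumes "fundamental_system \<beta> \<xi>" and "\<eta> \<le> \<xi>"
    and zero: "P schreier0"
    and step: "\<And>G. P G \<Longrightarrow> P (schreier_step G)"
    and limit: "\<And>T. (\<And>j. 1 \<le> j \<Longrightarrow> P (T j)) \<Longrightarrow> P (schreier_limit T)"
  shows "P (schreier \<beta> \<eta>)"
  using \<open>\<eta> \<le> \<xi>\<close>
proof (induction \<eta> rule: less_induct)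
  case (less \<eta>)
  consider "is_zero_ord \<eta>" | "is_succ_ord \<eta>" | "is_limit_ord \<eta>"
    unfolding is_limit_ord_def by blast
  then show ?case
  proof cases
    case 1
    then show ?thesis by (subst schreier_unfold) (simp add: zero)
  next
    case 2
    then have "\<not> is_zero_ord \<eta>" "opred \<eta> < \<eta>"
      using opred_less unfolding is_zero_ord_def by blast+
    moreover from less \<open>opred \<eta> < \<eta>\<close> have "P (schreier \<beta> (opred \<eta>))" by simp
    ultimately show ?thesis
      using 2 by (subst schreier_unfold) (simp add: step cut_apply)
  next
    case 3
    have lt: "osucc (\<beta> \<eta> j) < \<eta>" if "1 \<le> j" for j
      using assms(1) less.prems 3 that unfolding fundamental_system_def by blast
    have "schreier_limit (\<lambda>j. cut (schreier \<beta>) {(x, y). x < y} \<eta> (osucc (\<beta> \<eta> j)))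
        = schreier_limit (\<lambda>j. schreier \<beta> (osucc (\<beta> \<eta> j)))"
      unfolding schreier_limit_def by (auto simp: cut_apply lt)
    moreover have "P (schreier_limit (\<lambda>j. schreier \<beta> (osucc (\<beta> \<eta> j))))"
    proof (rule limit)
      fix j :: nat assume "1 \<le> j"
      with lt have "osucc (\<beta> \<eta> j) < \<eta>" by blast
      with less.prems show "P (schreier \<beta> (osucc (\<beta> \<eta> j)))"
        by (intro less.IH) auto
    qed
    ultimately show ?thesis
      using 3 by (subst schreier_unfold) (simp add: is_limit_ord_def)
  qed
qed

section \<open>Successive blocks and powers of families\<close>

definition successive_blocks :: "(nat \<Rightarrow> nat set) \<Rightarrow> nat \<Rightarrow> bool" where
  "successive_blocks B n \<longleftrightarrow> (\<forall>i i'. i < i' \<longrightarrow> i' < n \<longrightarrow> (\<forall>a\<in>B i. \<forall>b\<in>B i'. a < b))"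

lemma fam_power_iff:
  "X \<in> fam_power G n \<longleftrightarrow> (\<exists>B. (\<forall>i<n. B i \<in> G) \<and> successive_blocks B n \<and> X = (\<Union>i<n. B i))"
  unfolding fam_power_def successive_blocks_def by blast

lemma successive_blocks_consecutive:
  assumes ne: "\<forall>i<n. B i \<noteq> {} \<and> finite (B i)"
    and consec: "\<forall>i. Suc i < n \<longrightarrow> Max (B i) < Min (B (Suc i))"
  shows "successive_blocks B n"
proof -
  have below: "\<forall>a\<in>B i. a < Min (B i')" if "i < i'" "i' < n" for i i'
    using that
  proof (induction i')
    case 0
    then show ?case by simp
  next
    case (Suc i')
    have "Max (B i') < Min (B (Suc i'))" using consec Suc.prems by blast
    moreover have "\<forall>a\<in>B i. a \<le> Max (B i')"
    proof (cases "i = i'")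
      case True
      then show ?thesis using ne Suc.prems by simp
    next
      case False
      then have "\<forall>a\<in>B i. a < Min (B i')" using Suc by simp
      moreover have "Min (B i') \<le> Max (B i')" using ne Suc.prems by simp
      ultimately show ?thesis by fastforce
    qed
    ultimately show ?case by fastforce
  qed
  show ?thesis
    unfolding successive_blocks_def
  proof (intro allI impI ballI)
    fix i i' a b assume "i < i'" "i' < n" "a \<in> B i" "b \<in> B i'"
    with below[of i i'] ne show "a < b" by fastforce
  qed
qed

lemma successive_blocks_compress:
  assumes "successive_blocks B n"
  obtains m C where "m \<le> n" "\<forall>i<m. C i \<noteq> {} \<and> (\<exists>i'<n. C i = B i')"
    "successive_blocks C m" "(\<Union>i<m. C i) = (\<Union>i<n. B i)"
proof -
  define S where "S = {i. i < n \<and> B i \<noteq> {}}"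
  have "finite S" unfolding S_def by simp
  have bij: "bij_betw (enumerate S) {..<card S} S"
    using finite_bij_enumerate[OF \<open>finite S\<close>] .
  then have enum_S: "enumerate S i \<in> S" if "i < card S" for i
    using that by (auto dest: bij_betw_apply)
  have "card S \<le> n"
    using card_mono[of "{..<n}" S] unfolding S_def by auto
  moreover have "\<forall>i<card S. B (enumerate S i) \<noteq> {} \<and> (\<exists>i'<n. B (enumerate S i) = B i')"
    using enum_S unfolding S_def by blast
  moreover have "successive_blocks (\<lambda>i. B (enumerate S i)) (card S)"
    unfolding successive_blocks_def
  proof (intro allI impI)
    fix i i' assume "i < i'" "i' < card S"
    moreover have "x < n" if "x \<in> S" for x using that unfolding S_def by simp
    ultimately have "enumerate S i < enumerate S i'" "enumerate S i' < n"
      using finite_enumerate_mono[OF _ \<open>finite S\<close>] enum_S by auto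
    with assms show "\<forall>a\<in>B (enumerate S i). \<forall>b\<in>B (enumerate S i'). a < b"
      unfolding successive_blocks_def by blast
  qed
  moreover have "(\<Union>i<card S. B (enumerate S i)) = (\<Union>i<n. B i)"
  proof -
    have "(\<Union>i<card S. B (enumerate S i)) = (\<Union>i\<in>S. B i)"
      using bij_betw_imp_surj_on[OF bij] by (metis image_image)
    also have "\<dots> = (\<Union>i<n. B i)" unfolding S_def by auto
    finally show ?thesis .
  qed
  ultimately show ?thesis by (rule that)
qed

lemma successive_blocks_le:
  "successive_blocks B n \<Longrightarrow> m \<le> n \<Longrightarrow> successive_blocks B m"
  unfolding successive_blocks_def by (meson order_less_le_trans)

lemma fam_power_SucE:
  assumes "X \<in> fam_power G (Suc n)"
  obtains A B where "A \<in> fam_power G n" "B \<in> G" "\<forall>a\<in>A. \<forall>b\<in>B. a < b" "X = A \<union> B"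
proof -
  obtain C where C: "\<forall>i<Suc n. C i \<in> G" "successive_blocks C (Suc n)" "X = (\<Union>i<Suc n. C i)"
    using assms unfolding fam_power_iff by blast
  show ?thesis
  proof (rule that)
    show "(\<Union>i<n. C i) \<in> fam_power G n"
      unfolding fam_power_iff
    proof (rule exI[of _ C], intro conjI)
      show "\<forall>i<n. C i \<in> G" using C(1) by simp
      show "successive_blocks C n" using successive_blocks_le[OF C(2)] by simp
    qed (rule refl)
    show "C n \<in> G" using C(1) by simp
    show "\<forall>a\<in>(\<Union>i<n. C i). \<forall>b\<in>C n. a < b"
      using C(2) unfolding successive_blocks_def by blast
    show "X = (\<Union>i<n. C i) \<union> C n"
      using C(3) by (simp add: lessThan_Suc Un_commute)
  qed
qed

lemma schreier_step_subset_limit_fam_power: "schreier_step G \<subseteq> schreier_limit (fam_power G)"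
proof
  fix X assume "X \<in> schreier_step G"
  then consider "X = {}"
    | j B where "1 \<le> j" "\<forall>i<j. B i \<in> G \<and> B i \<noteq> {} \<and> finite (B i)"
        "\<forall>i. Suc i < j \<longrightarrow> Max (B i) < Min (B (Suc i))" "j \<le> Min (B 0)" "X = (\<Union>i<j. B i)"
    unfolding schreier_step_def by blast
  then show "X \<in> schreier_limit (fam_power G)"
  proof cases
    case 1
    then show ?thesis by (simp add: schreier_limit_def)
  next
    case 2
    have succ: "successive_blocks B j"
      using 2 by (intro successive_blocks_consecutive) auto
    have lower: "Min (B 0) \<le> x" if "x \<in> X" for x
    proof -
      obtain i where "i < j" "x \<in> B i" using \<open>x \<in> X\<close> 2(5) by blast
      show ?thesis
      proof (cases i)
        case 0
        then show ?thesis using 2(2) \<open>i < j\<close> \<open>x \<in> B i\<close> by simp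
      next
        case (Suc i')
        have "Min (B 0) \<in> B 0" using 2 by simp
        with succ Suc \<open>i < j\<close> \<open>x \<in> B i\<close> have "Min (B 0) < x"
          unfolding successive_blocks_def by blast
        then show ?thesis by simp
      qed
    qed
    have "B 0 \<subseteq> X" using 2(1,5) by auto
    then have "X \<noteq> {}" using 2(1,2) by auto
    moreover have "finite X" using 2(2,5) by simp
    ultimately have "j \<le> Min X" using 2(4) lower by (simp add: order.trans)
    moreover have "X \<in> fam_power G j"
      unfolding fam_power_iff using 2 succ by blast
    ultimately show ?thesis using 2(1) unfolding schreier_limit_def by blast
  qed
qed

lemma schreier_limit_fam_power_subset_step:
  assumes "\<forall>F\<in>G. finite F"
  shows "schreier_limit (fam_power G) \<subseteq> schreier_step G"
proof
  fix X assume X: "X \<in> schreier_limit (fam_power G)"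
  show "X \<in> schreier_step G"
  proof (cases "X = {}")
    case True
    then show ?thesis by (simp add: schreier_step_def)
  next
    case False
    then obtain j where j: "j \<le> Min X" "X \<in> fam_power G j"
      using X unfolding schreier_limit_def by blast
    then obtain B where B: "\<forall>i<j. B i \<in> G" "successive_blocks B j" "X = (\<Union>i<j. B i)"
      unfolding fam_power_iff by blast
    obtain m C where C: "m \<le> j" "\<forall>i<m. C i \<noteq> {} \<and> (\<exists>i'<j. C i = B i')"
      "successive_blocks C m" "(\<Union>i<m. C i) = (\<Union>i<j. B i)"
      using successive_blocks_compress[OF B(2)] by blast
    have X_eq: "X = (\<Union>i<m. C i)" using B(3) C(4) by simp
    have CG: "\<forall>i<m. C i \<in> G \<and> C i \<noteq> {} \<and> finite (C i)"
    proof (intro allI impI)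
      fix i assume "i < m"
      then obtain i' where "i' < j" "C i = B i'" "C i \<noteq> {}" using C(2) by blast
      then show "C i \<in> G \<and> C i \<noteq> {} \<and> finite (C i)" using B(1) assms by simp
    qed
    have "1 \<le> m" using False X_eq by (cases m) auto
    have consec: "\<forall>i. Suc i < m \<longrightarrow> Max (C i) < Min (C (Suc i))"
    proof (intro allI impI)
      fix i assume "Suc i < m"
      then have "Max (C i) \<in> C i" "Min (C (Suc i)) \<in> C (Suc i)" using CG by simp_all
      with C(3) \<open>Suc i < m\<close> show "Max (C i) < Min (C (Suc i))"
        unfolding successive_blocks_def by blast
    qed
    have "m \<le> Min (C 0)"
    proof -
      have "Min (C 0) \<in> C 0" using CG \<open>1 \<le> m\<close> by simp
      then have "Min (C 0) \<in> X" using X_eq \<open>1 \<le> m\<close> by auto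
      then have "Min X \<le> Min (C 0)" using CG X_eq by simp
      then show ?thesis using C(1) j(1) by simp
    qed
    then show ?thesis
      unfolding schreier_step_def
      by (intro insertI2 CollectI exI[of _ m] exI[of _ C]) (use X_eq \<open>1 \<le> m\<close> CG consec in blast)
  qed
qed

lemma schreier_step_eq_limit_fam_power:
  "\<forall>F\<in>G. finite F \<Longrightarrow> schreier_step G = schreier_limit (fam_power G)"
  using schreier_step_subset_limit_fam_power schreier_limit_fam_power_subset_step by blast

section \<open>Regular families\<close>

definition spreading :: "nat set set \<Rightarrow> bool" where
  "spreading S \<longleftrightarrow> (\<forall>h F. strict_mono h \<longrightarrow> F \<in> S \<longrightarrow> h ` F \<in> S)"

text \<open>For hereditary families this is compactness as a subset of the Cantor space \<open>2\<^sup>\<nat>\<close>.\<close>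
definition compact_family :: "nat set set \<Rightarrow> bool" where
  "compact_family S \<longleftrightarrow> (\<forall>L. infinite L \<longrightarrow> (\<exists>F\<subseteq>L. finite F \<and> F \<notin> S))"

definition regular_family :: "nat set set \<Rightarrow> bool" where
  "regular_family S \<longleftrightarrow>
     hereditary S \<and> spreading S \<and> compact_family S \<and> {} \<in> S \<and> (\<forall>F\<in>S. F \<subseteq> {1..})"

lemma compact_family_finite:
  assumes "hereditary S" "compact_family S" "F \<in> S"
  shows "finite F"
proof (rule ccontr)
  assume "infinite F"
  then obtain E where "E \<subseteq> F" "E \<notin> S"
    using assms(2) unfolding compact_family_def by blast
  with assms(1,3) show False unfolding hereditary_def by blast
qed

lemma infinite_above_finite:
  fixes L F :: "nat set"
  assumes "infinite L" "finite F"
  shows "infinite {x\<in>L. \<forall>a\<in>F. a < x}"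
proof
  assume "finite {x\<in>L. \<forall>a\<in>F. a < x}"
  moreover have "finite (\<Union>a\<in>F. {..a})" using assms(2) by simp
  moreover have "L \<subseteq> {x\<in>L. \<forall>a\<in>F. a < x} \<union> (\<Union>a\<in>F. {..a})" by (auto simp: not_less)
  ultimately show False using assms(1) by (meson finite_UnI finite_subset)
qed

lemma regular_schreier0: "regular_family schreier0"
  unfolding regular_family_def
proof (intro conjI)
  show "hereditary schreier0"
    unfolding hereditary_def schreier0_def by (auto simp: subset_singleton_iff)
  show "spreading schreier0"
    unfolding spreading_def
  proof (intro allI impI)
    fix h :: "nat \<Rightarrow> nat" and F assume "strict_mono h" "F \<in> schreier0"
    then consider "F = {}" | j where "1 \<le> j" "F = {j}"
      unfolding schreier0_def by blast
    then show "h ` F \<in> schreier0"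
    proof cases
      case 2
      then have "1 \<le> h j"
        using strict_mono_imp_increasing[OF \<open>strict_mono h\<close>, of j] by simp
      with 2 show ?thesis unfolding schreier0_def by blast
    qed (simp add: schreier0_def)
  qed
  show "compact_family schreier0"
    unfolding compact_family_def
  proof (intro allI impI)
    fix L :: "nat set" assume "infinite L"
    from infinite_imp_nonempty[OF this] obtain a where "a \<in> L" by blast
    moreover obtain b where "b \<in> L - {a}"
      using infinite_imp_nonempty[OF infinite_remove[OF \<open>infinite L\<close>, of a]] by blast
    ultimately show "\<exists>F\<subseteq>L. finite F \<and> F \<notin> schreier0"
      by (intro exI[of _ "{a, b}"]) (auto simp: schreier0_def doubleton_eq_iff)
  qed
qed (auto simp: schreier0_def)

lemma successive_blocks_image:
  fixes h :: "nat \<Rightarrow> nat"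
  shows "strict_mono h \<Longrightarrow> successive_blocks B n \<Longrightarrow> successive_blocks (\<lambda>i. h ` B i) n"
  unfolding successive_blocks_def strict_mono_def by blast

lemma successive_blocks_Int:
  "successive_blocks B n \<Longrightarrow> successive_blocks (\<lambda>i. B i \<inter> Y) n"
  unfolding successive_blocks_def by blast

lemma hereditary_fam_power:
  assumes "hereditary G"
  shows "hereditary (fam_power G n)"
  unfolding hereditary_def
proof (intro ballI allI impI)
  fix X Y assume "X \<in> fam_power G n" "Y \<subseteq> X"
  then obtain B where B: "\<forall>i<n. B i \<in> G" "successive_blocks B n" "X = (\<Union>i<n. B i)"
    unfolding fam_power_iff by blast
  have "\<forall>i<n. B i \<inter> Y \<in> G" using B(1) assms unfolding hereditary_def by blast
  moreover have "Y = (\<Union>i<n. B i \<inter> Y)" using B(3) \<open>Y \<subseteq> X\<close> by blast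
  ultimately show "Y \<in> fam_power G n"
    unfolding fam_power_iff using successive_blocks_Int[OF B(2)]
    by (intro exI[of _ "\<lambda>i. B i \<inter> Y"]) blast
qed

lemma spreading_fam_power:
  assumes "spreading G"
  shows "spreading (fam_power G n)"
  unfolding spreading_def
proof (intro allI impI)
  fix h :: "nat \<Rightarrow> nat" and X assume "strict_mono h" "X \<in> fam_power G n"
  then obtain B where B: "\<forall>i<n. B i \<in> G" "successive_blocks B n" "X = (\<Union>i<n. B i)"
    unfolding fam_power_iff by blast
  have "\<forall>i<n. h ` B i \<in> G" using B(1) assms \<open>strict_mono h\<close> unfolding spreading_def by blast
  moreover have "h ` X = (\<Union>i<n. h ` B i)" using B(3) by blast
  ultimately show "h ` X \<in> fam_power G n"
    unfolding fam_power_iff using successive_blocks_image[OF \<open>strict_mono h\<close> B(2)]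
    by (intro exI[of _ "\<lambda>i. h ` B i"]) blast
qed

lemma compact_fam_power_Suc:
  assumes "hereditary G" "compact_family G" "compact_family (fam_power G n)"
  shows "compact_family (fam_power G (Suc n))"
  unfolding compact_family_def
proof (intro allI impI)
  fix L :: "nat set" assume "infinite L"
  then obtain E where E: "E \<subseteq> L" "finite E" "E \<notin> fam_power G n"
    using assms(3) unfolding compact_family_def by blast
  have "infinite {x\<in>L. \<forall>a\<in>E. a < x}" using infinite_above_finite \<open>infinite L\<close> E(2) by blast
  then obtain E' where E': "E' \<subseteq> {x\<in>L. \<forall>a\<in>E. a < x}" "finite E'" "E' \<notin> G"
    using assms(2) unfolding compact_family_def by blast
  have "E \<union> E' \<notin> fam_power G (Suc n)"
  proof
    assume "E \<union> E' \<in> fam_power G (Suc n)"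
    then obtain A B where AB: "A \<in> fam_power G n" "B \<in> G" "\<forall>a\<in>A. \<forall>b\<in>B. a < b"
      "E \<union> E' = A \<union> B"
      by (rule fam_power_SucE)
    \<comment> \<open>\<open>E\<close> is not inside \<open>A\<close>, so it meets \<open>B\<close>, which then must contain everything above it\<close>
    have "\<not> E \<subseteq> A"
      using AB(1) E(3) hereditary_fam_power[OF assms(1)] unfolding hereditary_def by blast
    then obtain e where "e \<in> E" "e \<in> B" using AB(4) by blast
    have "E' \<subseteq> B"
    proof
      fix x assume "x \<in> E'"
      with E'(1) \<open>e \<in> E\<close> have "e < x" by blast
      with AB(3) \<open>e \<in> B\<close> have "x \<notin> A" by (meson less_asym)
      with AB(4) \<open>x \<in> E'\<close> show "x \<in> B" by blast
    qed
    with AB(2) E'(3) assms(1) show False unfolding hereditary_def by blast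
  qed
  moreover have "E \<union> E' \<subseteq> L" "finite (E \<union> E')" using E E' by auto
  ultimately show "\<exists>F\<subseteq>L. finite F \<and> F \<notin> fam_power G (Suc n)" by blast
qed

lemma compact_fam_power:
  assumes "hereditary G" "compact_family G"
  shows "compact_family (fam_power G n)"
proof (induction n)
  case 0
  have "fam_power G 0 = {{}}" unfolding fam_power_def by auto
  show ?case
    unfolding compact_family_def
  proof (intro allI impI)
    fix L :: "nat set" assume "infinite L"
    from infinite_imp_nonempty[OF this] obtain a where "a \<in> L" by blast
    with \<open>fam_power G 0 = {{}}\<close> show "\<exists>F\<subseteq>L. finite F \<and> F \<notin> fam_power G 0"
      by (intro exI[of _ "{a}"]) simp
  qed
qed (rule compact_fam_power_Suc[OF assms])

lemma regular_fam_power: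
  assumes "regular_family G"
  shows "regular_family (fam_power G n)"
proof -
  have G: "hereditary G" "spreading G" "compact_family G" "{} \<in> G" "\<forall>F\<in>G. F \<subseteq> {1..}"
    using assms by (simp_all add: regular_family_def)
  have "successive_blocks (\<lambda>_. {}) n" by (simp add: successive_blocks_def)
  then have "{} \<in> fam_power G n"
    unfolding fam_power_iff using G(4) by (intro exI[of _ "\<lambda>_. {}"]) simp
  moreover have "F \<subseteq> {1..}" if "F \<in> fam_power G n" for F
    using that G(5) unfolding fam_power_iff by blast
  ultimately show ?thesis
    unfolding regular_family_def
    using hereditary_fam_power[OF G(1)] spreading_fam_power[OF G(2)] compact_fam_power[OF G(1,3)]
    by blast
qed

lemma Min_le_Min_image_strict_mono:
  fixes h :: "nat \<Rightarrow> nat"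
  assumes "strict_mono h" "finite X" "X \<noteq> {}"
  shows "Min X \<le> Min (h ` X)"
proof -
  have "h (Min X) = Min (h ` X)"
    using mono_Min_commute[OF strict_mono_mono[OF assms(1)] assms(2,3)] .
  then show ?thesis using strict_mono_imp_increasing[OF assms(1), of "Min X"] by simp
qed

lemma schreier_limit_iff:
  "X \<in> schreier_limit T \<longleftrightarrow> X = {} \<or> (\<exists>j\<ge>1. j \<le> Min X \<and> X \<in> T j)"
  unfolding schreier_limit_def by blast

lemma hereditary_schreier_limit:
  assumes "\<And>j. 1 \<le> j \<Longrightarrow> hereditary (T j)" "\<And>j X. 1 \<le> j \<Longrightarrow> X \<in> T j \<Longrightarrow> finite X"
  shows "hereditary (schreier_limit T)"
  unfolding hereditary_def
proof (intro ballI allI impI)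
  fix X Y assume X: "X \<in> schreier_limit T" and "Y \<subseteq> X"
  show "Y \<in> schreier_limit T"
  proof (cases "Y = {}")
    case False
    with X \<open>Y \<subseteq> X\<close> obtain j where j: "1 \<le> j" "j \<le> Min X" "X \<in> T j"
      unfolding schreier_limit_iff by blast
    have "Min X \<le> Min Y" using Min_antimono[OF \<open>Y \<subseteq> X\<close> False assms(2)[OF j(1,3)]] .
    moreover have "Y \<in> T j"
      using assms(1)[OF j(1)] j(3) \<open>Y \<subseteq> X\<close> unfolding hereditary_def by blast
    ultimately show ?thesis unfolding schreier_limit_iff using j(1,2) by auto
  qed (simp add: schreier_limit_iff)
qed

lemma spreading_schreier_limit:
  assumes "\<And>j. 1 \<le> j \<Longrightarrow> spreading (T j)" "\<And>j X. 1 \<le> j \<Longrightarrow> X \<in> T j \<Longrightarrow> finite X"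
  shows "spreading (schreier_limit T)"
  unfolding spreading_def
proof (intro allI impI)
  fix h :: "nat \<Rightarrow> nat" and X assume "strict_mono h" and X: "X \<in> schreier_limit T"
  show "h ` X \<in> schreier_limit T"
  proof (cases "X = {}")
    case False
    with X obtain j where j: "1 \<le> j" "j \<le> Min X" "X \<in> T j"
      unfolding schreier_limit_iff by blast
    have "Min X \<le> Min (h ` X)"
      using Min_le_Min_image_strict_mono[OF \<open>strict_mono h\<close> assms(2)[OF j(1,3)] False] .
    moreover have "h ` X \<in> T j"
      using assms(1)[OF j(1)] j(3) \<open>strict_mono h\<close> unfolding spreading_def by blast
    ultimately show ?thesis unfolding schreier_limit_iff using j(1,2) by auto
  qed (simp add: schreier_limit_iff)
qed

lemma compact_schreier_limit:
  assumes "\<And>j. 1 \<le> j \<Longrightarrow> hereditary (T j)" "\<And>j. 1 \<le> j \<Longrightarrow> compact_family (T j)"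
  shows "compact_family (schreier_limit T)"
  unfolding compact_family_def
proof (intro allI impI)
  fix L :: "nat set" assume "infinite L"
  then obtain l where "l \<in> L" using infinite_imp_nonempty by blast
  define E where "E j = (SOME E. E \<subseteq> L \<and> finite E \<and> E \<notin> T j)" for j
  have E: "E j \<subseteq> L \<and> finite (E j) \<and> E j \<notin> T j" if "1 \<le> j" for j
  proof -
    have "\<exists>E. E \<subseteq> L \<and> finite E \<and> E \<notin> T j"
      using assms(2)[OF that] \<open>infinite L\<close> unfolding compact_family_def by blast
    then show ?thesis unfolding E_def by (rule someI_ex)
  qed
  \<comment> \<open>a member of \<open>T j\<close> with \<open>j \<le> Min X \<le> l\<close> would contain the witness \<open>E j\<close>\<close>
  define X where "X = insert l (\<Union>j\<in>{1..l}. E j)"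
  have "finite X" unfolding X_def using E by simp
  have "X \<notin> schreier_limit T"
  proof
    assume "X \<in> schreier_limit T"
    then obtain j where j: "1 \<le> j" "j \<le> Min X" "X \<in> T j"
      unfolding schreier_limit_iff X_def by blast
    then have "j \<le> l" using \<open>finite X\<close> Min_le[of X l] unfolding X_def by simp
    then have "E j \<subseteq> X" using j(1) unfolding X_def by auto
    then have "E j \<in> T j" using assms(1)[OF j(1)] j(3) unfolding hereditary_def by blast
    with E[OF j(1)] show False by blast
  qed
  moreover have "E j \<subseteq> L" if "j \<in> {1..l}" for j using E that by simp
  then have "X \<subseteq> L" unfolding X_def using \<open>l \<in> L\<close> by blast
  ultimately show "\<exists>F\<subseteq>L. finite F \<and> F \<notin> schreier_limit T" using \<open>finite X\<close> by blast
qed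

lemma regular_schreier_limit:
  assumes reg: "\<And>j. 1 \<le> j \<Longrightarrow> regular_family (T j)"
  shows "regular_family (schreier_limit T)"
proof -
  have T: "hereditary (T j)" "spreading (T j)" "compact_family (T j)" "\<forall>F\<in>T j. F \<subseteq> {1..}"
    if "1 \<le> j" for j
    using reg[OF that] by (simp_all add: regular_family_def)
  have fin: "finite X" if "1 \<le> j" "X \<in> T j" for j X
    using compact_family_finite T(1,3) that by blast
  have "F \<subseteq> {1..}" if "F \<in> schreier_limit T" for F
  proof (cases "F = {}")
    case False
    with that obtain j where "1 \<le> j" "F \<in> T j" unfolding schreier_limit_iff by blast
    with T(4) show ?thesis by blast
  qed simp
  then show ?thesis
    unfolding regular_family_def
    using hereditary_schreier_limit[OF T(1) fin] spreading_schreier_limit[OF T(2) fin]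
      compact_schreier_limit[OF T(1,3)]
    by (simp add: schreier_limit_iff)
qed

lemma regular_schreier:
  fixes \<xi> :: "'o::wellorder"
  assumes "fundamental_system \<beta> \<xi>"
  shows "regular_family (schreier \<beta> \<xi>)"
proof (rule schreier_induct[OF assms order_refl])
  fix G assume G: "regular_family G"
  then have "\<forall>F\<in>G. finite F"
    using compact_family_finite unfolding regular_family_def by blast
  moreover have "regular_family (schreier_limit (fam_power G))"
    using regular_schreier_limit regular_fam_power[OF G] by blast
  ultimately show "regular_family (schreier_step G)"
    by (simp add: schreier_step_eq_limit_fam_power)
qed (use regular_schreier0 regular_schreier_limit in auto)

section \<open>Ramsey property of compact hereditary families\<close>

lemma wf_psupset_compact_family:
  assumes "hereditary G" "compact_family G"
  shows "wf {(t, s). s \<subset> t \<and> t \<in> G}"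
  unfolding wf_iff_no_infinite_down_chain
proof
  assume "\<exists>f. \<forall>i. (f (Suc i), f i) \<in> {(t, s). s \<subset> t \<and> t \<in> G}"
  then obtain f where "\<forall>i. f i \<subset> f (Suc i) \<and> f (Suc i) \<in> G" by auto
  then have f: "f i \<subset> f (Suc i)" "f (Suc i) \<in> G" for i by blast+
  have fin: "finite (f (Suc i))" for i
    using compact_family_finite[OF assms f(2)] .
  have card: "i \<le> card (f (Suc i))" for i
  proof (induction i)
    case (Suc i)
    have "card (f (Suc i)) < card (f (Suc (Suc i)))" using psubset_card_mono[OF fin f(1)] .
    with Suc.IH show ?case by simp
  qed simp
  have mono: "f i \<subseteq> f j" if "i \<le> j" for i j
    by (rule lift_Suc_mono_le[OF _ that]) (rule psubset_imp_subset[OF f(1)])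
  define L where "L = (\<Union>i. f i)"
  have "infinite L"
  proof
    assume "finite L"
    moreover have "f (Suc (Suc (card L))) \<subseteq> L" unfolding L_def by blast
    ultimately have "card (f (Suc (Suc (card L)))) \<le> card L" by (rule card_mono)
    with card[of "Suc (card L)"] show False by simp
  qed
  then obtain E where E: "E \<subseteq> L" "finite E" "E \<notin> G"
    using assms(2) unfolding compact_family_def by blast
  have "subset.chain UNIV (range f)"
    unfolding subset_chain_def
  proof (intro conjI ballI)
    fix A B assume "A \<in> range f" "B \<in> range f"
    then obtain i j where "A = f i" "B = f j" by blast
    then show "A \<subseteq> B \<or> B \<subseteq> A" using mono nat_le_linear[of i j] by blast
  qed simp
  moreover have "E \<subseteq> \<Union>(range f)" using E(1) unfolding L_def .
  ultimately obtain B where "B \<in> range f" "E \<subseteq> B"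
    using finite_subset_Union_chain[OF E(2)] by blast
  then obtain i where "E \<subseteq> f i" by blast
  then have "E \<subseteq> f (Suc i)" using f(1) by blast
  with f(2) E(3) assms(1) show False unfolding hereditary_def by blast
qed

lemma fusion_sequence:
  fixes R :: "nat \<Rightarrow> nat set \<Rightarrow> 'c \<Rightarrow> bool" and M :: "nat set" and I :: "'c set"
  assumes "infinite M"
    and step: "\<And>X. infinite X \<Longrightarrow> X \<subseteq> M \<Longrightarrow>
      \<exists>Y c. infinite Y \<and> Y \<subseteq> X - {Inf X} \<and> c \<in> I \<and> R (Inf X) Y c"
  obtains X :: "nat \<Rightarrow> nat set" and col :: "nat \<Rightarrow> 'c"
  where "\<And>i. infinite (X i)" "\<And>i. X i \<subseteq> M" "\<And>i. X (Suc i) \<subseteq> X i - {Inf (X i)}"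
    "\<And>i. col i \<in> I" "\<And>i. R (Inf (X i)) (X (Suc i)) (col i)"
proof -
  define P where "P X p \<longleftrightarrow>
    infinite (fst p) \<and> fst p \<subseteq> X - {Inf X} \<and> snd p \<in> I \<and> R (Inf X) (fst p) (snd p)" for X p
  define nxt where "nxt X = (SOME p. P X p)" for X
  have nxt: "P X (nxt X)" if X: "infinite X" "X \<subseteq> M" for X
  proof -
    obtain Y c where "infinite Y \<and> Y \<subseteq> X - {Inf X} \<and> c \<in> I \<and> R (Inf X) Y c"
      using step[OF X] by blast
    then have "P X (Y, c)" unfolding P_def by simp
    then show ?thesis unfolding nxt_def by (rule someI)
  qed
  define X where "X = rec_nat M (\<lambda>_ Z. fst (nxt Z))"
  have X_0: "X 0 = M" and X_Suc: "X (Suc i) = fst (nxt (X i))" for i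
    by (simp_all add: X_def)
  have X: "infinite (X i) \<and> X i \<subseteq> M" for i
  proof (induction i)
    case (Suc i)
    then have "P (X i) (nxt (X i))" by (intro nxt) simp_all
    with Suc show ?case unfolding P_def X_Suc by blast
  qed (simp add: X_0 \<open>infinite M\<close>)
  then have "P (X i) (nxt (X i))" for i by (simp add: nxt)
  then show ?thesis
    using X by (intro that[of X "\<lambda>i. snd (nxt (X i))"]) (simp_all add: P_def X_Suc)
qed

lemma diagonal_fusion:
  fixes R :: "nat \<Rightarrow> nat set \<Rightarrow> 'c \<Rightarrow> bool" and M :: "nat set" and I :: "'c set"
  assumes "finite I" "infinite M"
    and step: "\<And>X. infinite X \<Longrightarrow> X \<subseteq> M \<Longrightarrow>
      \<exists>Y c. infinite Y \<and> Y \<subseteq> X - {Inf X} \<and> c \<in> I \<and> R (Inf X) Y c"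
  obtains N c where "infinite N" "N \<subseteq> M" "c \<in> I"
    "\<And>m. m \<in> N \<Longrightarrow> \<exists>Y. R m Y c \<and> {x\<in>N. m < x} \<subseteq> Y"
proof -
  obtain X col where X: "\<And>i. infinite (X i)" "\<And>i. X i \<subseteq> M"
    and X_Suc: "\<And>i. X (Suc i) \<subseteq> X i - {Inf (X i)}"
    and col: "\<And>i. col i \<in> I" and R: "\<And>i. R (Inf (X i)) (X (Suc i)) (col i)"
    using fusion_sequence[OF assms(2) step] by blast
  define m where "m i = Inf (X i)" for i
  have m_in: "m i \<in> X i" for i
    unfolding m_def using X(1)[of i] by (simp add: Inf_nat_def1 infinite_imp_nonempty)
  have X_anti: "X j \<subseteq> X i" if "i \<le> j" for i j
    using lift_Suc_antimono_le[of X, OF _ that] X_Suc by blast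
  have "m i < m j" if "i < j" for i j
  proof -
    have "m j \<in> X (Suc i)" using X_anti[of "Suc i" j] m_in[of j] that by auto
    then have "m j \<in> X i" "m j \<noteq> m i" using X_Suc[of i] unfolding m_def by auto
    moreover have "m i \<le> m j" using \<open>m j \<in> X i\<close> unfolding m_def by (rule cInf_lower) simp
    ultimately show ?thesis by simp
  qed
  then have "strict_mono m" by (rule strict_monoI)
  \<comment> \<open>pigeonhole: one colour occurs at infinitely many stages\<close>
  have "finite (range col)" using col \<open>finite I\<close> by (meson finite_subset image_subset_iff)
  then obtain c where "c \<in> range col" "infinite (col -` {c})"
    using inf_img_fin_domE[OF _ infinite_UNIV_nat] by blast
  define N where "N = m ` (col -` {c})"
  show ?thesis
  proof (rule that)
    show "infinite N"
      unfolding N_def using \<open>infinite (col -` {c})\<close> strict_mono_imp_inj_on[OF \<open>strict_mono m\<close>]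
      by (meson finite_imageD inj_on_subset subset_UNIV)
    show "N \<subseteq> M" unfolding N_def using m_in X(2) by blast
    show "c \<in> I" using \<open>c \<in> range col\<close> col by blast
    fix x assume "x \<in> N"
    then obtain i where i: "x = m i" "col i = c" unfolding N_def by blast
    have "{y\<in>N. x < y} \<subseteq> X (Suc i)"
    proof
      fix y assume "y \<in> {y\<in>N. x < y}"
      then obtain j where "y = m j" "m i < m j" using i(1) unfolding N_def by blast
      then have "Suc i \<le> j" using \<open>strict_mono m\<close> by (simp add: strict_mono_less)
      then show "y \<in> X (Suc i)" using X_anti m_in \<open>y = m j\<close> by blast
    qed
    with R[of i] i show "\<exists>Y. R x Y c \<and> {y\<in>N. x < y} \<subseteq> Y" unfolding m_def by blast
  qed
qed

definition homogeneous :: "nat set set \<Rightarrow> nat set set \<Rightarrow> nat set \<Rightarrow> nat set \<Rightarrow> bool" where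
  "homogeneous G D s N \<longleftrightarrow> (\<forall>F\<subseteq>N. s \<union> F \<in> G \<longrightarrow> s \<union> F \<in> D)"

lemma homogeneous_if_homogeneous_insert:
  assumes "\<forall>F\<in>G. finite F" "s \<in> D"
    and ext: "\<And>m. m \<in> N \<Longrightarrow> \<exists>Y. homogeneous G D (insert m s) Y \<and> {x\<in>N. m < x} \<subseteq> Y"
  shows "homogeneous G D s N"
  unfolding homogeneous_def
proof (intro allI impI)
  fix F assume "F \<subseteq> N" "s \<union> F \<in> G"
  show "s \<union> F \<in> D"
  proof (cases "F = {}")
    case False
    have "finite (s \<union> F)" using assms(1) \<open>s \<union> F \<in> G\<close> by blast
    then have "finite F" by simp
    define m where "m = Min F"
    have "m \<in> F" unfolding m_def using \<open>finite F\<close> False by simp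
    then obtain Y where "homogeneous G D (insert m s) Y" "{x\<in>N. m < x} \<subseteq> Y"
      using ext \<open>F \<subseteq> N\<close> by blast
    moreover have "F - {m} \<subseteq> {x\<in>N. m < x}"
    proof
      fix x assume "x \<in> F - {m}"
      then have "m \<le> x" "x \<noteq> m" unfolding m_def using \<open>finite F\<close> by auto
      then show "x \<in> {x\<in>N. m < x}" using \<open>F \<subseteq> N\<close> \<open>x \<in> F - {m}\<close> by auto
    qed
    moreover have "insert m s \<union> (F - {m}) = s \<union> F" using \<open>m \<in> F\<close> by blast
    ultimately show ?thesis
      using \<open>s \<union> F \<in> G\<close> unfolding homogeneous_def by (metis order.trans)
  qed (use \<open>s \<in> D\<close> in simp)
qed

lemma ramsey_compact_family_above:
  fixes C :: "'c \<Rightarrow> nat set set" and I :: "'c set"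
  assumes I: "finite I" "\<forall>i\<in>I. hereditary (C i)"
    and G: "hereditary G" "compact_family G" "G \<subseteq> (\<Union>i\<in>I. C i)"
  shows "s \<in> G \<Longrightarrow> infinite M \<Longrightarrow> \<forall>a\<in>s. \<forall>b\<in>M. a < b \<Longrightarrow>
    \<exists>N c. N \<subseteq> M \<and> infinite N \<and> c \<in> I \<and> homogeneous G (C c) s N"
proof (induction s arbitrary: M rule: wf_induct_rule[OF wf_psupset_compact_family[OF G(1,2)]])
  case (1 s M)
  then have "s \<in> G" "infinite M" and s_below: "\<forall>a\<in>s. \<forall>b\<in>M. a < b" by blast+
  obtain c0 where c0: "c0 \<in> I" "s \<in> C c0" using \<open>s \<in> G\<close> G(3) by blast
  define R where "R m Y c \<longleftrightarrow> s \<in> C c \<and> homogeneous G (C c) (insert m s) Y" for m Y c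
  have step: "\<exists>Y c. infinite Y \<and> Y \<subseteq> X - {Inf X} \<and> c \<in> I \<and> R (Inf X) Y c"
    if X: "infinite X" "X \<subseteq> M" for X
  proof -
    define m where "m = Inf X"
    have "m \<in> X" unfolding m_def using X(1) by (simp add: Inf_nat_def1 infinite_imp_nonempty)
    have "m \<le> x" if "x \<in> X" for x unfolding m_def using that by (rule cInf_lower) simp
    then have above: "\<forall>a\<in>insert m s. \<forall>b\<in>X - {m}. a < b"
      using s_below X(2) by fastforce
    have "infinite (X - {m})" using X(1) by simp
    show ?thesis
    proof (cases "insert m s \<in> G")
      case True
      have "m \<notin> s" using s_below \<open>m \<in> X\<close> X(2) by blast
      then have "(insert m s, s) \<in> {(t, s). s \<subset> t \<and> t \<in> G}" using True by blast
      from "1.IH"[OF this True \<open>infinite (X - {m})\<close> above]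
      obtain Y c where Y: "Y \<subseteq> X - {m}" "infinite Y" "c \<in> I" "homogeneous G (C c) (insert m s) Y"
        by blast
      then have "insert m s \<in> C c"
        using Y(4)[unfolded homogeneous_def, rule_format, of "{}"] True by simp
      then have "s \<in> C c" using I(2) \<open>c \<in> I\<close> unfolding hereditary_def by blast
      with Y show ?thesis unfolding m_def[symmetric] R_def by blast
    next
      case False
      \<comment> \<open>no extension of \<open>insert m s\<close> lies in \<open>G\<close>, so homogeneity is vacuous\<close>
      have "homogeneous G (C c0) (insert m s) (X - {m})"
        using False G(1) unfolding homogeneous_def hereditary_def by blast
      with c0 \<open>infinite (X - {m})\<close> show ?thesis unfolding m_def[symmetric] R_def by blast
    qed
  qed
  obtain N c where N: "infinite N" "N \<subseteq> M" "c \<in> I"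
    and R_N: "\<And>m. m \<in> N \<Longrightarrow> \<exists>Y. R m Y c \<and> {x\<in>N. m < x} \<subseteq> Y"
    using diagonal_fusion[OF I(1) \<open>infinite M\<close> step] by blast
  obtain m where "m \<in> N" using N(1) infinite_imp_nonempty by blast
  then have "s \<in> C c" using R_N unfolding R_def by blast
  moreover have "\<forall>F\<in>G. finite F" using compact_family_finite[OF G(1,2)] by blast
  ultimately have "homogeneous G (C c) s N"
    using R_N unfolding R_def by (intro homogeneous_if_homogeneous_insert) blast+
  with N show ?case by blast
qed

lemma ramsey_compact_family:
  fixes C :: "'c \<Rightarrow> nat set set" and I :: "'c set"
  assumes "finite I" "\<forall>i\<in>I. hereditary (C i)"
    and "hereditary G" "compact_family G" "{} \<in> G" "G \<subseteq> (\<Union>i\<in>I. C i)"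
    and "infinite M"
  obtains N c where "N \<subseteq> M" "infinite N" "c \<in> I" "\<And>F. F \<in> G \<Longrightarrow> F \<subseteq> N \<Longrightarrow> F \<in> C c"
  using ramsey_compact_family_above[OF assms(1-4,6,5,7)] that
  unfolding homogeneous_def by auto

section \<open>Subsequences and the theorem\<close>

text \<open>\<open>enumerate1 N i\<close> is the paper's \<open>n\<^sub>i\<close> for \<open>N = (n\<^sub>i)\<close>, indexed from \<open>i = 1\<close>.\<close>
definition enumerate1 :: "nat set \<Rightarrow> nat \<Rightarrow> nat" where
  "enumerate1 N i = enumerate N (i - 1)"

lemma fam_image_eq: "fam_image N G = (\<lambda>F. enumerate1 N ` F) ` G"
  unfolding fam_image_def enumerate1_def ..

lemma enumerate_eq_strict_mono:
  fixes g :: "nat \<Rightarrow> nat"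
  assumes "strict_mono g" "range g = S"
  shows "enumerate S n = g n"
proof -
  have "infinite S"
    using assms strict_mono_imp_inj_on[OF assms(1)] by (metis finite_imageD infinite_UNIV_nat)
  show ?thesis
  proof (induction n)
    case 0
    show ?case unfolding enumerate_0
    proof (rule Least_equality)
      show "g 0 \<in> S" using assms(2) by blast
      fix y assume "y \<in> S"
      then show "g 0 \<le> y" using assms by (auto simp: strict_mono_less_eq)
    qed
  next
    case (Suc n)
    show ?case unfolding enumerate_Suc''[OF \<open>infinite S\<close>] Suc.IH
    proof (rule Least_equality)
      show "g (Suc n) \<in> S \<and> g n < g (Suc n)" using assms by (auto simp: strict_mono_less)
      fix y assume "y \<in> S \<and> g n < y"
      then show "g (Suc n) \<le> y" using assms by (auto simp: strict_mono_less strict_mono_less_eq)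
    qed
  qed
qed

lemma enumerate_image:
  fixes f :: "nat \<Rightarrow> nat"
  assumes "strict_mono_on A f" "L \<subseteq> A" "infinite L"
  shows "enumerate (f ` L) n = f (enumerate L n)"
proof -
  have "strict_mono (f \<circ> enumerate L)"
    using assms enumerate_in_set[OF assms(3)] enumerate_mono[OF _ assms(3)]
    unfolding strict_mono_def strict_mono_on_def by (simp add: subset_iff)
  moreover have "range (f \<circ> enumerate L) = f ` L"
    unfolding image_comp[symmetric] range_enumerate[OF assms(3)] ..
  ultimately show ?thesis using enumerate_eq_strict_mono by simp
qed

lemma strict_mono_on_enumerate1: "infinite M \<Longrightarrow> strict_mono_on {1..} (enumerate1 M)"
  unfolding strict_mono_on_def enumerate1_def by auto

lemma enumerate1_in_set: "infinite M \<Longrightarrow> enumerate1 M i \<in> M"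
  unfolding enumerate1_def by (rule enumerate_in_set)

lemma enumerate1_image:
  assumes "infinite M" "infinite L" "L \<subseteq> {1..}"
  shows "enumerate1 (enumerate1 M ` L) i = enumerate1 M (enumerate1 L i)"
  unfolding enumerate1_def[of "enumerate1 M ` L"] enumerate1_def[of L]
  using enumerate_image[OF strict_mono_on_enumerate1[OF assms(1)] assms(3,2)] .

text \<open>A strictly monotone map on all of \<open>\<nat>\<close> agreeing with \<open>enumerate1 L\<close> on \<open>{1..}\<close>,
  as \<^const>\<open>spreading\<close> requires.\<close>
lemma enumerate1_eq_enumerate_insert_0:
  assumes "L \<subseteq> {1..}" "1 \<le> i"
  shows "enumerate1 L i = enumerate (insert 0 L) i"
proof -
  have "enumerate (insert 0 L) 0 = 0" by (simp add: enumerate_0)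
  moreover have "insert 0 L - {0} = L" using assms(1) by auto
  moreover obtain k where "i = Suc k" using assms(2) by (cases i) auto
  ultimately show ?thesis unfolding enumerate1_def by (simp add: enumerate_Suc')
qed

lemma fam_image_image:
  assumes "infinite M" "infinite L" "L \<subseteq> {1..}"
  shows "fam_image (enumerate1 M ` L) G = (\<lambda>F. enumerate1 M ` F) ` fam_image L G"
  unfolding fam_image_eq image_image enumerate1_image[OF assms, abs_def] by (simp add: image_comp)

lemma fam_image_subset:
  assumes "spreading G" "\<forall>F\<in>G. F \<subseteq> {1..}" "infinite L" "L \<subseteq> {1..}"
  shows "fam_image L G \<subseteq> {F\<in>G. F \<subseteq> L}"
proof
  fix F assume "F \<in> fam_image L G"
  then obtain E where E: "E \<in> G" "F = enumerate1 L ` E" unfolding fam_image_eq by blast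
  have "F = enumerate (insert 0 L) ` E"
    using E assms(2,4) enumerate1_eq_enumerate_insert_0 by (auto simp: subset_iff)
  moreover have "strict_mono (enumerate (insert 0 L))"
    using assms(3) by (simp add: strict_mono_enumerate)
  ultimately have "F \<in> G" using assms(1) E(1) unfolding spreading_def by blast
  moreover have "F \<subseteq> L" using E(2) enumerate1_in_set[OF assms(3)] by blast
  ultimately show "F \<in> {F\<in>G. F \<subseteq> L}" by blast
qed

lemma hereditary_vimage_image:
  assumes "hereditary D"
  shows "hereditary {A. f ` A \<in> D}"
  unfolding hereditary_def
proof (intro ballI allI impI)
  fix A B assume "A \<in> {A. f ` A \<in> D}" "B \<subseteq> A"
  then have "f ` A \<in> D" "f ` B \<subseteq> f ` A" by auto
  with assms show "B \<in> {A. f ` A \<in> D}" unfolding hereditary_def by blast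
qed

lemma ramsey_fam_image:
  fixes \<F> :: "'c \<Rightarrow> nat set set" and I :: "'c set"
  assumes "regular_family P" "infinite M"
    and "finite I" "\<forall>i\<in>I. hereditary (\<F> i)" "fam_image M P \<subseteq> (\<Union>i\<in>I. \<F> i)"
  obtains N c where "N \<subseteq> M" "infinite N" "c \<in> I" "fam_image N P \<subseteq> \<F> c"
proof -
  have P: "hereditary P" "spreading P" "compact_family P" "{} \<in> P" "\<forall>F\<in>P. F \<subseteq> {1..}"
    using assms(1) by (simp_all add: regular_family_def)
  \<comment> \<open>colour the index sets \<open>F \<in> P\<close> by the family containing \<open>M(F)\<close>\<close>
  define C where "C i = {F. enumerate1 M ` F \<in> \<F> i}" for i
  have C_hereditary: "\<forall>i\<in>I. hereditary (C i)"
    unfolding C_def using assms(4) hereditary_vimage_image by blast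
  have P_cover: "P \<subseteq> (\<Union>i\<in>I. C i)"
  proof
    fix F assume "F \<in> P"
    then have "enumerate1 M ` F \<in> (\<Union>i\<in>I. \<F> i)" using assms(5) unfolding fam_image_eq by blast
    then show "F \<in> (\<Union>i\<in>I. C i)" unfolding C_def by blast
  qed
  obtain L c where L: "L \<subseteq> {1..}" "infinite L" "c \<in> I"
    and L_C: "\<And>F. F \<in> P \<Longrightarrow> F \<subseteq> L \<Longrightarrow> F \<in> C c"
    using ramsey_compact_family[OF assms(3) C_hereditary P(1,3,4) P_cover infinite_Ici] by blast
  have "fam_image L P \<subseteq> C c"
    using fam_image_subset[OF P(2,5) L(2,1)] L_C by blast
  show ?thesis
  proof (rule that)
    show "fam_image (enumerate1 M ` L) P \<subseteq> \<F> c"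
      unfolding fam_image_image[OF assms(2) L(2,1)] using \<open>fam_image L P \<subseteq> C c\<close>
      unfolding C_def by blast
    show "enumerate1 M ` L \<subseteq> M" using enumerate1_in_set[OF assms(2)] by blast
    show "infinite (enumerate1 M ` L)"
      using L(1,2) strict_mono_on_imp_inj_on[OF strict_mono_on_enumerate1[OF assms(2)]]
      by (meson finite_imageD inj_on_subset)
  qed (rule L(3))
qed

theorem lemma2p14:
  fixes M :: "nat set" and n k :: nat and \<xi> :: "'o::wellorder"
    and \<beta> :: "'o \<Rightarrow> nat \<Rightarrow> 'o" and \<F> :: "nat \<Rightarrow> nat set set"
  assumes "infinite M" and "M \<subseteq> {1..}"
    and "1 \<le> n"
    and "countable {..\<xi>}"
    and "fundamental_system \<beta> \<xi>"
    and "\<forall>i\<in>{1..k}. hereditary (\<F> i) \<and> (\<forall>A\<in>\<F> i. finite A \<and> A \<subseteq> {1..})"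
    and "fam_image M (fam_power (schreier \<beta> \<xi>) n) = (\<Union>i\<in>{1..k}. \<F> i)"
  shows "\<exists>N i\<^sub>0. N \<subseteq> M \<and> infinite N \<and> i\<^sub>0 \<in> {1..k} \<and>
           fam_image N (fam_power (schreier \<beta> \<xi>) n) \<subseteq> \<F> i\<^sub>0"
proof -
  have regular: "regular_family (fam_power (schreier \<beta> \<xi>) n)"
    using regular_fam_power[OF regular_schreier[OF assms(5)]] .
  have hereditary: "\<forall>i\<in>{1..k}. hereditary (\<F> i)" using assms(6) by blast
  obtain N c where "N \<subseteq> M" "infinite N" "c \<in> {1..k}"
    "fam_image N (fam_power (schreier \<beta> \<xi>) n) \<subseteq> \<F> c"
    using ramsey_fam_image[OF regular assms(1) finite_atLeastAtMost hereditary equalityD1[OF assms(7)]]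
    by blast
  then show ?thesis by blast
qed

end
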